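(* Let $a_1,a_2,b_1,b_2,\gamma>0$ and define $F_1(r)=\frac1{a_1}r^{a_1}$, $F_2(r)=\frac1{a_2}r^{a_2}$ for $r\ge0$, and $h(\mathbf r)=\dfrac{r_1^{b_1}r_2^{b_2}}{(1+r_1+r_2)^\gamma}$ for $\mathbf r\in[0,\infty)^2$. Then $F_1,F_2,h$ satisfy all the conditions (F), (h), ($\theta$) listed in the context if and only if, for $j=1,2$, \[a_j\ge2,\qquad b_j\ge2a_j-1,\qquad b_1+b_2\le\gamma+\min\{a_1,a_2\}.\]
   Context: Conditions. (F): for $j=1,2$, $F_j:[0,\infty)\to[0,\infty)$ is $C^2$ with $F_j''(r)>0$ for $r>0$, $F_j(0)=F_j'(0)=0$, $\liminf_{r\to\infty}F_j''(r)>0$, $\limsup_{r\to\infty}F_j'(r)/F_j(r)<\infty$; there are $m_j,M_j>0$, $\beta_j\ge0$, $r_0>0$ with $m_jr^{\beta_j}\le F_j''(r)\le M_jr^{\beta_j}$ for $0\le r\le r_0$; and $F_j(r)-rF_j'(r)+r^2F_j''(r)\ge0$ for all $r\ge0$. (h): $h:[0,\infty)^2\to\mathbb R$ is $C^2$ with $h(r_1,0)=h(0,r_2)=0$ and $\partial_{r_j}h(r_1,0)=\partial_{r_j}h(0,r_2)=0$ for $j=1,2$ and all $r_1,r_2\ge0$. ($\theta$): with $\theta_j(\mathbf u):=\partial_{r_j}h((F_1')^{-1}(u_1),(F_2')^{-1}(u_2))$ and $\theta_{j,i}:=\partial_{u_i}\theta_j$ (i.e. $\theta_{j,i}(\mathbf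 u)=\partial_{r_i}\partial_{r_j}h(\mathbf r)/F_i''(r_i)$, $r_k=(F_k')^{-1}(u_k)$), each $\theta_{j,i}$ is locally Lipschitz on $[0,\infty)^2$ and there are constants $\kappa_{j,i}>0$ with $|\partial_{r_i}\partial_{r_j}h(\mathbf r)|\le\kappa_{j,i}F_i''(r_i)\min\{1,F_1'(r_1),F_2'(r_2),\sqrt{r_i/r_j}\}$ for all $\mathbf r\in[0,\infty)^2$ and $i,j\in\{1,2\}$. *)

theory Defs
  imports "HOL-Analysis.Analysis" "HOL-Library.Liminf_Limsup"
begin

definition Qd :: "(real \<times> real) set" where
  "Qd = {0..} \<times> {0..}"

definition coord :: "nat \<Rightarrow> real \<times> real \<Rightarrow> real" where
  "coord i p = (if i = 1 then fst p else snd p)"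

definition upd :: "nat \<Rightarrow> real \<Rightarrow> real \<times> real \<Rightarrow> real \<times> real" where
  "upd i t p = (if i = 1 then (t, snd p) else (fst p, t))"

text \<open>Real power with the usual convention 0^0 = 1 (used for r \<ge> 0, exponent \<ge> 0).\<close>
definition rpow :: "real \<Rightarrow> real \<Rightarrow> real" where
  "rpow r b = (if r = 0 then (if b = 0 then 1 else 0) else r powr b)"

definition locally_lipschitz_on :: "(real \<times> real) set \<Rightarrow> (real \<times> real \<Rightarrow> real) \<Rightarrow> bool" where
  "locally_lipschitz_on S f \<longleftrightarrow>
     (\<forall>x\<in>S. \<exists>e>0. \<exists>L. L-lipschitz_on (cball x e \<inter> S) f)"

definition C2_nonneg :: "(real \<Rightarrow> real) \<Rightarrow> (real \<Rightarrow> real) \<Rightarrow> (real \<Rightarrow> real) \<Rightarrow> bool" where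
  "C2_nonneg F F' F'' \<longleftrightarrow>
     (\<forall>r\<ge>0. (F has_real_derivative F' r) (at r within {0..}) \<and>
             (F' has_real_derivative F'' r) (at r within {0..})) \<and>
     continuous_on {0..} F''"

text \<open>Condition (F) for one function, except for the near-zero bound (whose r0 is shared).\<close>
definition cond_F :: "(real \<Rightarrow> real) \<Rightarrow> (real \<Rightarrow> real) \<Rightarrow> (real \<Rightarrow> real) \<Rightarrow> bool" where
  "cond_F F F' F'' \<longleftrightarrow>
     C2_nonneg F F' F'' \<and>
     (\<forall>r\<ge>0. F r \<ge> 0) \<and>
     (\<forall>r>0. F'' r > 0) \<and>
     F 0 = 0 \<and> F' 0 = 0 \<and>
     Liminf at_top (\<lambda>r. ereal (F'' r)) > 0 \<and>
     Limsup at_top (\<lambda>r. ereal (F' r / F r)) < \<infinity> \<and>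
     (\<forall>r\<ge>0. F r - r * F' r + r\<^sup>2 * F'' r \<ge> 0)"

definition near0_F :: "(real \<Rightarrow> real) \<Rightarrow> real \<Rightarrow> bool" where
  "near0_F F'' r0 \<longleftrightarrow>
     (\<exists>m M \<beta>. m > 0 \<and> M > 0 \<and> \<beta> \<ge> 0 \<and>
        (\<forall>r. 0 \<le> r \<and> r \<le> r0 \<longrightarrow> m * rpow r \<beta> \<le> F'' r \<and> F'' r \<le> M * rpow r \<beta>))"

text \<open>h is C^2 on the closed quadrant; Dh j = \<partial>_{r_j} h, D2h j i = \<partial>_{r_i}\<partial>_{r_j} h.\<close>
definition C2_quadrant :: "(real \<times> real \<Rightarrow> real) \<Rightarrow> (nat \<Rightarrow> real \<times> real \<Rightarrow> real)
     \<Rightarrow> (nat \<Rightarrow> nat \<Rightarrow> real \<times> real \<Rightarrow> real) \<Rightarrow> bool" where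
  "C2_quadrant h Dh D2h \<longleftrightarrow>
     (\<forall>p\<in>Qd. (h has_derivative (\<lambda>v. fst v * Dh 1 p + snd v * Dh 2 p)) (at p within Qd) \<and>
        (\<forall>j\<in>{1,2}. (Dh j has_derivative (\<lambda>v. fst v * D2h j 1 p + snd v * D2h j 2 p)) (at p within Qd))) \<and>
     (\<forall>j\<in>{1,2}. \<forall>i\<in>{1,2}. continuous_on Qd (D2h j i))"

definition cond_h :: "(real \<times> real \<Rightarrow> real) \<Rightarrow> (nat \<Rightarrow> real \<times> real \<Rightarrow> real)
     \<Rightarrow> (nat \<Rightarrow> nat \<Rightarrow> real \<times> real \<Rightarrow> real) \<Rightarrow> bool" where
  "cond_h h Dh D2h \<longleftrightarrow>
     C2_quadrant h Dh D2h \<and>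
     (\<forall>r1\<ge>0. h (r1, 0) = 0) \<and> (\<forall>r2\<ge>0. h (0, r2) = 0) \<and>
     (\<forall>j\<in>{1,2}. (\<forall>r1\<ge>0. Dh j (r1, 0) = 0) \<and> (\<forall>r2\<ge>0. Dh j (0, r2) = 0))"

definition theta :: "(real \<Rightarrow> real) \<Rightarrow> (real \<Rightarrow> real) \<Rightarrow> (nat \<Rightarrow> real \<times> real \<Rightarrow> real)
     \<Rightarrow> nat \<Rightarrow> real \<times> real \<Rightarrow> real" where
  "theta F1' F2' Dh j u = Dh j (inv_into {0..} F1' (fst u), inv_into {0..} F2' (snd u))"

definition cond_theta :: "(real \<Rightarrow> real) \<Rightarrow> (real \<Rightarrow> real) \<Rightarrow> (real \<Rightarrow> real) \<Rightarrow> (real \<Rightarrow> real)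
     \<Rightarrow> (nat \<Rightarrow> real \<times> real \<Rightarrow> real) \<Rightarrow> (nat \<Rightarrow> nat \<Rightarrow> real \<times> real \<Rightarrow> real) \<Rightarrow> bool" where
  "cond_theta F1' F1'' F2' F2'' Dh D2h \<longleftrightarrow>
     (\<forall>j\<in>{1::nat,2}. \<forall>i\<in>{1::nat,2}.
        (\<exists>\<theta>ji. (\<forall>u\<in>Qd. ((\<lambda>t. theta F1' F2' Dh j (upd i t u)) has_real_derivative \<theta>ji u)
                          (at (coord i u) within {0..})) \<and>
               locally_lipschitz_on Qd \<theta>ji) \<and>
        (\<exists>\<kappa>>0. \<forall>r\<in>Qd. \<bar>D2h j i r\<bar> \<le>
            \<kappa> * (if i = 1 then F1'' else F2'') (coord i r) *
            min 1 (min (F1' (fst r)) (min (F2' (snd r)) (sqrt (coord i r / coord j r))))))"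

definition all_conditions :: "(real \<Rightarrow> real) \<Rightarrow> (real \<Rightarrow> real) \<Rightarrow> (real \<times> real \<Rightarrow> real) \<Rightarrow> bool" where
  "all_conditions F1 F2 h \<longleftrightarrow>
     (\<exists>F1' F1'' F2' F2'' Dh D2h.
        cond_F F1 F1' F1'' \<and> cond_F F2 F2' F2'' \<and>
        (\<exists>r0>0. near0_F F1'' r0 \<and> near0_F F2'' r0) \<and>
        cond_h h Dh D2h \<and>
        cond_theta F1' F1'' F2' F2'' Dh D2h)"

end

theory Submission
  imports Defs
begin

text \<open>
  With F_j(r) = r^a_j / a_j we have F_j'(r) = r^(a_j - 1), so the near-zero bound on F_j''
  forces a_j \<ge> 2, and \<theta>_j(u) is \<partial>_j h evaluated at (u_1^c_1, u_2^c_2) with c_i = 1/(a_i - 1).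

  Sufficiency: h and all its partial derivatives are finite sums of terms
  c x^k1 y^k2 (1 + x + y)^-n, and every partial derivative lowers the degree k1 + k2 - n by
  one. For x, y > 0 such a term is at most x^e1 y^e2 as soon as e1 \<le> k1, e2 \<le> k2 and the
  degree is at most e1 + e2. The inequalities b_j \<ge> 2 a_j - 1 and b1 + b2 \<le> \<gamma> + min a1 a2
  are exactly what this needs to give every monomial bound required by (\<theta>); the same
  exponent bounds make \<theta>_{j,i} locally Lipschitz and let \<theta>_j have zero derivative on
  the axes.

  Necessity: the bound of (\<theta>) on \<partial>_j \<partial>_j h can be integrated twice along a segment in
  direction j starting on an axis. Through (1, 1) it gives h = O(t^(2 a_j - 1)) as t \<rightarrow> 0,
  whereas h is of order t^b_j there; up to the diagonal point (s, s) it gives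
  h(s, s) = O(s^a_j) as s \<rightarrow> \<infinity>, whereas h(s, s) is of order s^(b1 + b2 - \<gamma>).
\<close>

lemma mem_Qd_iff: "p \<in> Qd \<longleftrightarrow> 0 \<le> fst p \<and> 0 \<le> snd p"
  by (simp add: Qd_def mem_Times_iff)

lemma upd_coord: "upd i (coord i p) p = p"
  by (simp add: upd_def coord_def)

lemma upd_upd [simp]: "upd i s (upd i t p) = upd i s p"
  by (simp add: upd_def)

lemma coord_upd [simp]: "coord i (upd i t p) = t"
  by (simp add: upd_def coord_def)

section \<open>Powers on the half-line\<close>

lemma has_real_derivative_0_if_powr_bound:
  fixes f :: "real \<Rightarrow> real"
  assumes "f 0 = 0" "0 < d" "1 < e"
    and bound: "\<And>t. 0 < t \<Longrightarrow> t < d \<Longrightarrow> \<bar>f t\<bar> \<le> C * t powr e"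
  shows "(f has_real_derivative 0) (at 0 within {0..})"
proof -
  have "\<forall>\<^sub>F t in at 0 within {0..}. norm ((f t - f 0) / (t - 0)) \<le> C * t powr (e - 1)"
  proof -
    have "\<forall>\<^sub>F t in at 0 within {0..}. 0 < t \<and> t < d"
      using \<open>0 < d\<close> by (auto simp: eventually_at dist_real_def intro!: exI[of _ d])
    then show ?thesis
    proof (rule eventually_mono)
      fix t :: real assume t: "0 < t \<and> t < d"
      then have "\<bar>f t\<bar> / t \<le> C * t powr e / t"
        using bound by (simp add: divide_right_mono)
      then show "norm ((f t - f 0) / (t - 0)) \<le> C * t powr (e - 1)"
        using t \<open>f 0 = 0\<close> by (simp add: abs_divide powr_diff)
    qed
  qed
  moreover have "((\<lambda>t. C * t powr (e - 1)) \<longlongrightarrow> C * 0 powr (e - 1)) (at 0 within {0..})"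
    using \<open>1 < e\<close> by (intro tendsto_intros) (auto simp: eventually_at_filter)
  ultimately show ?thesis
    unfolding has_field_derivative_iff using \<open>1 < e\<close> by (auto intro: Lim_null_comparison)
qed

lemma has_real_derivative_powr_nonneg:
  fixes b x :: real
  assumes "1 < b" "0 \<le> x"
  shows "((\<lambda>x. x powr b) has_real_derivative b * x powr (b - 1)) (at x within {0..})"
proof (cases "x = 0")
  case True
  have "((\<lambda>x. x powr b) has_real_derivative 0) (at 0 within {0..})"
    by (rule has_real_derivative_0_if_powr_bound[where d = 1 and e = b and C = 1]) (use assms in auto)
  then show ?thesis using True \<open>1 < b\<close> by simp
next
  case False
  then show ?thesis
    using assms has_real_derivative_powr[of x b] by (auto intro: has_field_derivative_at_within)
qed

lemma abs_le_powr_if_abs_derivative_le: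
  fixes f f' :: "real \<Rightarrow> real"
  assumes "0 < e" "0 < X" "continuous_on {0..X} f" "f 0 = 0"
    and f': "\<And>t. 0 < t \<Longrightarrow> t < X \<Longrightarrow> (f has_real_derivative f' t) (at t)"
    and f'_bound: "\<And>t. 0 < t \<Longrightarrow> t < X \<Longrightarrow> \<bar>f' t\<bar> \<le> C * t powr (e - 1)"
  shows "\<bar>f X\<bar> \<le> C / e * X powr e"
proof -
  have "norm (f X - f 0) \<le> C / e * X powr e - C / e * 0 powr e"
  proof (rule differentiable_bound_general[where f' = f' and \<phi>' = "\<lambda>t. C * t powr (e - 1)"])
    show "continuous_on {0..X} (\<lambda>t. C / e * t powr e)"
      using \<open>0 < e\<close> by (intro continuous_intros continuous_on_powr') auto
    fix t assume t: "0 < t" "t < X"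
    have "((\<lambda>t. C / e * t powr e) has_real_derivative C / e * (e * t powr (e - 1))) (at t)"
      by (rule DERIV_cmult[OF has_real_derivative_powr[OF t(1)]])
    then show "((\<lambda>t. C / e * t powr e) has_vector_derivative C * t powr (e - 1)) (at t)"
      using \<open>0 < e\<close> by (simp add: has_real_derivative_iff_has_vector_derivative[symmetric])
    show "(f has_vector_derivative f' t) (at t)"
      using f'[OF t] by (simp add: has_real_derivative_iff_has_vector_derivative)
    show "norm (f' t) \<le> C * t powr (e - 1)"
      using f'_bound[OF t] by simp
  qed (use assms in auto)
  then show ?thesis using \<open>f 0 = 0\<close> \<open>0 < e\<close> by simp
qed

lemma abs_le_powr_if_abs_second_derivative_le:
  fixes H D E :: "real \<Rightarrow> real"
  assumes "1 < e" "0 < X"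
    and "continuous_on {0..X} H" "continuous_on {0..X} D"
    and "\<And>t. 0 < t \<Longrightarrow> t < X \<Longrightarrow> (H has_real_derivative D t) (at t)"
    and D': "\<And>t. 0 < t \<Longrightarrow> t < X \<Longrightarrow> (D has_real_derivative E t) (at t)"
    and "H 0 = 0" "D 0 = 0"
    and E_bound: "\<And>t. 0 < t \<Longrightarrow> t < X \<Longrightarrow> \<bar>E t\<bar> \<le> C * t powr (e - 2)"
  shows "\<bar>H X\<bar> \<le> C / (e * (e - 1)) * X powr e"
proof -
  have D_bound: "\<bar>D t\<bar> \<le> C / (e - 1) * t powr (e - 1)" if "0 < t" "t < X" for t
  proof (rule abs_le_powr_if_abs_derivative_le[where f' = E])
    show "continuous_on {0..t} D"
      using \<open>continuous_on {0..X} D\<close> by (rule continuous_on_subset) (use that in auto)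
  qed (use assms that in \<open>auto simp: diff_diff_add\<close>)
  have "\<bar>H X\<bar> \<le> C / (e - 1) / e * X powr e"
    by (rule abs_le_powr_if_abs_derivative_le[where f' = D]) (use assms D_bound in auto)
  then show ?thesis by (simp add: mult.commute)
qed

lemma exponent_le_if_powr_bounded_at_top:
  fixes e e' C :: real
  assumes bound: "\<And>s. 1 \<le> s \<Longrightarrow> s powr e \<le> C * s powr e'"
  shows "e \<le> e'"
proof (rule ccontr)
  assume "\<not> e \<le> e'"
  define s where "s = max 1 ((\<bar>C\<bar> + 1) powr (1 / (e - e')))"
  have "1 \<le> s" by (simp add: s_def)
  have "s powr (e - e') * s powr e' \<le> C * s powr e'"
    using bound[OF \<open>1 \<le> s\<close>] \<open>1 \<le> s\<close> by (simp add: powr_add[symmetric])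
  then have "s powr (e - e') \<le> C"
    using \<open>1 \<le> s\<close> by simp
  moreover have "\<bar>C\<bar> + 1 \<le> s powr (e - e')"
  proof -
    have "\<bar>C\<bar> + 1 = ((\<bar>C\<bar> + 1) powr (1 / (e - e'))) powr (e - e')"
      using \<open>\<not> e \<le> e'\<close> by (simp add: powr_powr)
    also have "\<dots> \<le> s powr (e - e')"
      using \<open>\<not> e \<le> e'\<close> by (intro powr_mono2) (auto simp: s_def)
    finally show ?thesis .
  qed
  ultimately show False by linarith
qed

lemma exponent_le_if_powr_bounded_at_0:
  fixes e e' C \<delta> :: real
  assumes "0 < \<delta>" and bound: "\<And>t. 0 < t \<Longrightarrow> t \<le> \<delta> \<Longrightarrow> t powr e \<le> C * t powr e'"
  shows "e' \<le> e"
proof (rule ccontr)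
  assume "\<not> e' \<le> e"
  define t where "t = min \<delta> ((\<bar>C\<bar> + 1) powr (1 / (e - e')))"
  have "0 < t" "t \<le> \<delta>" using \<open>0 < \<delta>\<close> by (auto simp: t_def)
  have "t powr (e - e') * t powr e' \<le> C * t powr e'"
    using bound[OF \<open>0 < t\<close> \<open>t \<le> \<delta>\<close>] \<open>0 < t\<close> by (simp add: powr_add[symmetric])
  then have "t powr (e - e') \<le> C"
    using \<open>0 < t\<close> by simp
  moreover have "\<bar>C\<bar> + 1 \<le> t powr (e - e')"
  proof -
    have "\<bar>C\<bar> + 1 = ((\<bar>C\<bar> + 1) powr (1 / (e - e'))) powr (e - e')"
      using \<open>\<not> e' \<le> e\<close> by (simp add: powr_powr)
    also have "\<dots> \<le> t powr (e - e')"
      using \<open>\<not> e' \<le> e\<close> \<open>0 < t\<close> by (intro powr_mono2') (auto simp: t_def)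
    finally show ?thesis .
  qed
  ultimately show False by linarith
qed

section \<open>Quasi-polynomials\<close>

text \<open>
  A list of terms (c, k1, k2, n) stands for the sum of the c x^k1 y^k2 (1 + x + y)^-n. The
  function h of the theorem is the single term (1, b1, b2, \<gamma>), and dpoly i computes the
  partial derivative in the i-th variable (as for coord and upd, any i \<noteq> 1 means the second
  variable).
\<close>

type_synonym qterms = "(real \<times> real \<times> real \<times> real) list"

definition qmonom :: "real \<Rightarrow> real \<Rightarrow> real \<Rightarrow> real \<times> real \<Rightarrow> real" where
  "qmonom k1 k2 n p = fst p powr k1 * snd p powr k2 * (1 + fst p + snd p) powr (- n)"

fun qpoly :: "qterms \<Rightarrow> real \<times> real \<Rightarrow> real" where
  "qpoly [] p = 0"
| "qpoly ((c, k1, k2, n) # ts) p = c * qmonom k1 k2 n p + qpoly ts p"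

fun dpoly :: "nat \<Rightarrow> qterms \<Rightarrow> qterms" where
  "dpoly i [] = []"
| "dpoly i ((c, k1, k2, n) # ts) =
     (if i = 1 then (c * k1, k1 - 1, k2, n) else (c * k2, k1, k2 - 1, n)) #
     (- c * n, k1, k2, n + 1) # dpoly i ts"

fun coeff_norm :: "qterms \<Rightarrow> real" where
  "coeff_norm [] = 0"
| "coeff_norm ((c, _) # ts) = \<bar>c\<bar> + coeff_norm ts"

definition graded :: "real \<Rightarrow> real \<Rightarrow> real \<Rightarrow> qterms \<Rightarrow> bool" where
  "graded d l1 l2 ts \<longleftrightarrow> (\<forall>(c, k1, k2, n) \<in> set ts. l1 \<le> k1 \<and> l2 \<le> k2 \<and> 0 \<le> n \<and> k1 + k2 - n = d)"

lemma qterms_induct [case_names Nil Cons]: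
  "P [] \<Longrightarrow> (\<And>c k1 k2 n ts. P ts \<Longrightarrow> P ((c, k1, k2, n) # ts)) \<Longrightarrow> P ts"
  by (induction ts) auto

lemma graded_Nil [simp]: "graded d l1 l2 []"
  and graded_Cons [simp]: "graded d l1 l2 ((c, k1, k2, n) # ts) \<longleftrightarrow>
     l1 \<le> k1 \<and> l2 \<le> k2 \<and> 0 \<le> n \<and> k1 + k2 - n = d \<and> graded d l1 l2 ts"
  by (auto simp: graded_def)

lemma graded_dpoly:
  "graded d l1 l2 ts \<Longrightarrow> graded (d - 1) (l1 - of_bool (i = 1)) (l2 - of_bool (i \<noteq> 1)) (dpoly i ts)"
  by (induction i ts rule: dpoly.induct) auto

lemma coeff_norm_nonneg: "0 \<le> coeff_norm ts"
  by (induction ts rule: coeff_norm.induct) auto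

lemma qmonom_nonneg: "p \<in> Qd \<Longrightarrow> 0 \<le> qmonom k1 k2 n p"
  by (simp add: qmonom_def mem_Qd_iff)

text \<open>This relies on the convention 0 powr k = 0, which Isabelle adopts for every exponent k.\<close>

lemma qpoly_eq_0_on_axes: "fst p = 0 \<or> snd p = 0 \<Longrightarrow> qpoly ts p = 0"
  by (induction ts p rule: qpoly.induct) (auto simp: qmonom_def)

lemma continuous_on_qpoly:
  assumes "graded d l1 l2 ts" "0 < l1" "0 < l2"
  shows "continuous_on Qd (qpoly ts)"
  using assms(1)
proof (induction ts rule: qterms_induct)
  case (Cons c k1 k2 n ts)
  have "continuous_on Qd (\<lambda>p. c * qmonom k1 k2 n p)"
    unfolding qmonom_def using Cons.prems assms(2,3)
    by (intro continuous_intros continuous_on_powr') (auto simp: mem_Qd_iff)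
  then show ?case using Cons by (auto intro: continuous_on_add)
qed simp

lemma has_derivative_fst_powr:
  assumes "1 < k" "p \<in> Qd"
  shows "((\<lambda>p. fst p powr k) has_derivative (\<lambda>v. fst v * (k * fst p powr (k - 1)))) (at p within Qd)"
proof -
  have "((\<lambda>x. x powr k) has_derivative (\<lambda>x. (k * fst p powr (k - 1)) * x)) (at (fst p) within {0..})"
    using has_real_derivative_powr_nonneg[OF assms(1), of "fst p"] assms(2)
    by (simp add: has_field_derivative_def mem_Qd_iff)
  then have "((\<lambda>x. x powr k) has_derivative (\<lambda>x. (k * fst p powr (k - 1)) * x)) (at (fst p) within fst ` Qd)"
    by (rule has_derivative_subset) (auto simp: mem_Qd_iff)
  from has_derivative_in_compose[OF has_derivative_fst[OF has_derivative_ident] this]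
  show ?thesis by (simp add: mult.commute)
qed

lemma has_derivative_snd_powr:
  assumes "1 < k" "p \<in> Qd"
  shows "((\<lambda>p. snd p powr k) has_derivative (\<lambda>v. snd v * (k * snd p powr (k - 1)))) (at p within Qd)"
proof -
  have "((\<lambda>x. x powr k) has_derivative (\<lambda>x. (k * snd p powr (k - 1)) * x)) (at (snd p) within {0..})"
    using has_real_derivative_powr_nonneg[OF assms(1), of "snd p"] assms(2)
    by (simp add: has_field_derivative_def mem_Qd_iff)
  then have "((\<lambda>x. x powr k) has_derivative (\<lambda>x. (k * snd p powr (k - 1)) * x)) (at (snd p) within snd ` Qd)"
    by (rule has_derivative_subset) (auto simp: mem_Qd_iff)
  from has_derivative_in_compose[OF has_derivative_snd[OF has_derivative_ident] this]
  show ?thesis by (simp add: mult.commute)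
qed

lemma has_derivative_qmonom:
  assumes "1 < k1" "1 < k2" "p \<in> Qd"
  shows "(qmonom k1 k2 n has_derivative (\<lambda>v.
            fst v * (k1 * qmonom (k1 - 1) k2 n p - n * qmonom k1 k2 (n + 1) p) +
            snd v * (k2 * qmonom k1 (k2 - 1) n p - n * qmonom k1 k2 (n + 1) p))) (at p within Qd)"
proof -
  define S where "S = 1 + fst p + snd p"
  have "0 < S" using assms(3) by (simp add: S_def mem_Qd_iff add_pos_nonneg)
  have "S powr (- n) / S = S powr (- (n + 1))"
    using powr_diff[of S "- n" 1] \<open>0 < S\<close> by simp
  then have W: "((\<lambda>p. (1 + fst p + snd p) powr (- n)) has_derivative
          (\<lambda>v. (fst v + snd v) * (- n * S powr (- (n + 1))))) (at p within Qd)"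
    using \<open>0 < S\<close> assms(3) unfolding S_def
    by (auto intro!: derivative_eq_intros simp: fun_eq_iff field_simps)
  show ?thesis
    unfolding qmonom_def[abs_def]
    by (rule has_derivative_eq_rhs,
        rule has_derivative_mult[OF has_derivative_mult[OF has_derivative_fst_powr[OF assms(1,3)]
            has_derivative_snd_powr[OF assms(2,3)]] W])
      (simp add: fun_eq_iff S_def algebra_simps)
qed

lemma has_derivative_qpoly:
  assumes "graded d l1 l2 ts" "1 < l1" "1 < l2" "p \<in> Qd"
  shows "(qpoly ts has_derivative (\<lambda>v. fst v * qpoly (dpoly 1 ts) p + snd v * qpoly (dpoly 2 ts) p))
           (at p within Qd)"
  using assms(1)
proof (induction ts rule: qterms_induct)
  case Nil
  have "qpoly [] = (\<lambda>p. 0)" by (simp add: fun_eq_iff)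
  then show ?case by (simp add: has_derivative_const[of 0, simplified])
next
  case (Cons c k1 k2 n ts)
  then have "1 < k1" "1 < k2" using assms(2,3) by auto
  have "((\<lambda>p. c * qmonom k1 k2 n p + qpoly ts p) has_derivative
          (\<lambda>v. fst v * qpoly (dpoly 1 ((c, k1, k2, n) # ts)) p +
               snd v * qpoly (dpoly 2 ((c, k1, k2, n) # ts)) p)) (at p within Qd)"
    by (rule has_derivative_eq_rhs, rule has_derivative_add[OF has_derivative_mult_right
          [OF has_derivative_qmonom[OF \<open>1 < k1\<close> \<open>1 < k2\<close> assms(4)]]])
      (use Cons in \<open>auto simp: fun_eq_iff algebra_simps\<close>)
  then show ?case by simp
qed

lemma has_real_derivative_partial:
  assumes "(f has_derivative (\<lambda>v. fst v * A + snd v * B)) (at p within Qd)" "p \<in> Qd"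
  shows "((\<lambda>t. f (upd i t p)) has_real_derivative coord i (A, B)) (at (coord i p) within {0..})"
proof -
  have line: "((\<lambda>t. upd i t p) has_derivative (\<lambda>t. upd i t 0)) (at (coord i p) within {0..})"
  proof (cases "i = 1")
    case True
    then show ?thesis
      using has_derivative_Pair[OF has_derivative_ident has_derivative_const, of "snd p"]
      by (simp add: upd_def)
  next
    case False
    then show ?thesis
      using has_derivative_Pair[OF has_derivative_const has_derivative_ident, of "fst p"]
      by (simp add: upd_def)
  qed
  have "(\<lambda>t. upd i t p) ` {0..} \<subseteq> Qd"
    using assms(2) by (auto simp: upd_def mem_Qd_iff)
  with upd_coord[of i p] have "(f has_derivative (\<lambda>v. fst v * A + snd v * B))
      (at (upd i (coord i p) p) within (\<lambda>t. upd i t p) ` {0..})"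
    using assms(1) by (simp add: has_derivative_subset)
  from has_derivative_in_compose[OF line this]
  show ?thesis
    unfolding has_field_derivative_def
    by (rule has_derivative_eq_rhs) (cases "i = 1"; simp add: fun_eq_iff upd_def coord_def)
qed

lemma has_real_derivative_qpoly_partial:
  assumes "graded d l1 l2 ts" "1 < l1" "1 < l2" "p \<in> Qd" "i \<in> {1, 2}"
  shows "((\<lambda>t. qpoly ts (upd i t p)) has_real_derivative qpoly (dpoly i ts) p) (at (coord i p) within {0..})"
proof -
  have "coord i (qpoly (dpoly 1 ts) p, qpoly (dpoly 2 ts) p) = qpoly (dpoly i ts) p"
    using assms(5) by (auto simp: coord_def)
  then show ?thesis
    using has_real_derivative_partial[OF has_derivative_qpoly[OF assms(1-4)] assms(4), of i] by simp
qed

lemma qmonom_le_powr: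
  assumes "0 < x" "0 < y" "e1 \<le> k1" "e2 \<le> k2" "k1 + k2 - n \<le> e1 + e2"
  shows "qmonom k1 k2 n (x, y) \<le> x powr e1 * y powr e2"
proof -
  define S where "S = 1 + x + y"
  have S: "1 \<le> S" "x \<le> S" "y \<le> S" using assms(1,2) by (auto simp: S_def)
  have "x powr (k1 - e1) * y powr (k2 - e2) * S powr (- n) \<le> S powr (k1 - e1) * S powr (k2 - e2) * S powr (- n)"
    using assms S by (intro mult_right_mono mult_mono powr_mono2) auto
  also have "\<dots> = S powr ((k1 - e1) + (k2 - e2) + (- n))"
    by (simp only: powr_add)
  also have "\<dots> \<le> S powr 0"
    using assms(5) S by (intro powr_mono) auto
  finally have rest: "x powr (k1 - e1) * y powr (k2 - e2) * S powr (- n) \<le> 1"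
    using S by simp
  have "x powr k1 = x powr e1 * x powr (k1 - e1)" "y powr k2 = y powr e2 * y powr (k2 - e2)"
    by (simp_all add: powr_add[symmetric])
  then have "qmonom k1 k2 n (x, y) = x powr e1 * y powr e2 * (x powr (k1 - e1) * y powr (k2 - e2) * S powr (- n))"
    by (simp add: qmonom_def S_def mult_ac)
  also have "\<dots> \<le> x powr e1 * y powr e2 * 1"
    using rest by (intro mult_left_mono) auto
  finally show ?thesis by simp
qed

lemma abs_qpoly_le:
  assumes "graded d l1 l2 ts" "0 < x" "0 < y" "e1 \<le> l1" "e2 \<le> l2" "d \<le> e1 + e2"
  shows "\<bar>qpoly ts (x, y)\<bar> \<le> coeff_norm ts * (x powr e1 * y powr e2)"
  using assms(1)
proof (induction ts rule: qterms_induct)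
  case (Cons c k1 k2 n ts)
  have "qmonom k1 k2 n (x, y) \<le> x powr e1 * y powr e2"
    using Cons.prems assms by (intro qmonom_le_powr) auto
  moreover have "0 \<le> qmonom k1 k2 n (x, y)"
    using assms(2,3) by (intro qmonom_nonneg) (simp add: mem_Qd_iff)
  ultimately have "\<bar>c * qmonom k1 k2 n (x, y)\<bar> \<le> \<bar>c\<bar> * (x powr e1 * y powr e2)"
    by (simp add: abs_mult mult_left_mono)
  moreover have "\<bar>qpoly ts (x, y)\<bar> \<le> coeff_norm ts * (x powr e1 * y powr e2)"
    using Cons by simp
  ultimately show ?case
    using abs_triangle_ineq[of "c * qmonom k1 k2 n (x, y)" "qpoly ts (x, y)"]
    unfolding qpoly.simps coeff_norm.simps distrib_right by linarith
qed simp

lemma qmonom_le_powr_powr: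
  assumes "p \<in> Qd" "0 \<le> n"
  shows "qmonom k1 k2 n p \<le> fst p powr k1 * snd p powr k2"
proof -
  have "(1 + fst p + snd p) powr (- n) \<le> (1 + fst p + snd p) powr 0"
    using assms by (intro powr_mono) (auto simp: mem_Qd_iff)
  then show ?thesis
    using assms(1) by (simp add: qmonom_def mem_Qd_iff mult_left_le)
qed

lemma qpoly_bound_near_axis:
  assumes "graded d l1 l2 ts" "v \<in> Qd" "i \<in> {1, 2}"
  obtains C where "\<And>s. 0 \<le> s \<Longrightarrow> s \<le> 1 \<Longrightarrow> \<bar>qpoly ts (upd i s v)\<bar> \<le> C * s powr coord i (l1, l2)"
proof -
  have "\<exists>C. \<forall>s. 0 \<le> s \<and> s \<le> 1 \<longrightarrow> \<bar>qpoly ts (upd i s v)\<bar> \<le> C * s powr coord i (l1, l2)"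
    using assms(1)
  proof (induction ts rule: qterms_induct)
    case Nil
    then show ?case by (intro exI[of _ 0]) simp
  next
    case (Cons c k1 k2 n ts)
    then obtain C where C: "\<And>s. 0 \<le> s \<Longrightarrow> s \<le> 1 \<Longrightarrow> \<bar>qpoly ts (upd i s v)\<bar> \<le> C * s powr coord i (l1, l2)"
      by auto
    define B where "B = (if i = 1 then snd v powr k2 else fst v powr k1)"
    have "\<bar>c * qmonom k1 k2 n (upd i s v)\<bar> \<le> \<bar>c\<bar> * B * s powr coord i (l1, l2)" if s: "0 \<le> s" "s \<le> 1" for s
    proof -
      have "upd i s v \<in> Qd" using assms(2) s by (auto simp: upd_def mem_Qd_iff)
      then have "0 \<le> qmonom k1 k2 n (upd i s v)" "qmonom k1 k2 n (upd i s v) \<le> fst (upd i s v) powr k1 * snd (upd i s v) powr k2"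
        using Cons.prems by (auto intro: qmonom_nonneg qmonom_le_powr_powr)
      moreover have "fst (upd i s v) powr k1 * snd (upd i s v) powr k2 \<le>
          (if i = 1 then s powr l1 * snd v powr k2 else fst v powr k1 * s powr l2)"
        using Cons.prems assms(2) s
        by (auto simp: upd_def mem_Qd_iff intro!: mult_left_mono mult_right_mono powr_mono')
      moreover have "(if i = 1 then s powr l1 * snd v powr k2 else fst v powr k1 * s powr l2) =
          B * s powr coord i (l1, l2)"
        by (simp add: B_def coord_def)
      ultimately show ?thesis
        by (simp add: abs_mult mult.assoc mult_left_mono)
    qed
    then show ?case
      using C abs_triangle_ineq by (intro exI[of _ "\<bar>c\<bar> * B + C"]) (force simp: distrib_right)
  qed
  then show ?thesis using that by blast
qed

text \<open>
  The chain rule for t \<mapsto> t^c stays within quasi-polynomials, because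
  (s^c)^k \<cdot> c s^(c - 1) = c (s^c)^(k + 1 - 1/c); this is what rescale records.
\<close>

definition reparam :: "real \<Rightarrow> real \<Rightarrow> real \<times> real \<Rightarrow> real \<times> real" where
  "reparam c1 c2 u = (fst u powr c1, snd u powr c2)"

definition rescale :: "nat \<Rightarrow> real \<Rightarrow> qterms \<Rightarrow> qterms" where
  "rescale i c ts = map (\<lambda>(b, k1, k2, n).
     (c * b, if i = 1 then k1 + 1 - 1 / c else k1, if i = 1 then k2 else k2 + 1 - 1 / c, n)) ts"

lemma rescale_Nil [simp]: "rescale i c [] = []"
  and rescale_Cons [simp]: "rescale i c ((b, k1, k2, n) # ts) =
     (c * b, if i = 1 then k1 + 1 - 1 / c else k1, if i = 1 then k2 else k2 + 1 - 1 / c, n) # rescale i c ts"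
  by (simp_all add: rescale_def)

lemma graded_rescale:
  "graded d l1 l2 ts \<Longrightarrow>
    graded (d + 1 - 1 / c) (l1 + of_bool (i = 1) * (1 - 1 / c)) (l2 + of_bool (i \<noteq> 1) * (1 - 1 / c)) (rescale i c ts)"
  by (induction ts rule: qterms_induct) auto

lemma qpoly_rescale:
  assumes "0 < s" "0 < c" "i \<in> {1, 2}"
  shows "qpoly ts (upd i (s powr c) v) * (c * s powr (c - 1)) = qpoly (rescale i c ts) (upd i (s powr c) v)"
proof (induction ts rule: qterms_induct)
  case (Cons b k1 k2 n ts)
  have "(s powr c) powr k * (c * s powr (c - 1)) = c * (s powr c) powr (k + 1 - 1 / c)" for k
  proof -
    have "c * k + (c - 1) = c * (k + 1 - 1 / c)"
      using \<open>0 < c\<close> by (simp add: field_simps)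
    then show ?thesis
      using \<open>0 < s\<close> by (simp add: powr_powr powr_add[symmetric])
  qed
  then show ?case
    using Cons assms(3) by (auto simp: upd_def qmonom_def algebra_simps)
qed simp

lemma reparam_upd: "i \<in> {1, 2} \<Longrightarrow> reparam c1 c2 (upd i t u) = upd i (t powr coord i (c1, c2)) (reparam c1 c2 u)"
  by (auto simp: reparam_def upd_def coord_def)

lemma has_real_derivative_qpoly_powr_at_axis:
  assumes "graded d l1 l2 ts" "v \<in> Qd" "i \<in> {1, 2}" "0 < c" "1 < c * coord i (l1, l2)"
  shows "((\<lambda>t. qpoly ts (upd i (t powr c) v)) has_real_derivative 0) (at 0 within {0..})"
proof -
  obtain C where C: "\<And>s. 0 \<le> s \<Longrightarrow> s \<le> 1 \<Longrightarrow> \<bar>qpoly ts (upd i s v)\<bar> \<le> C * s powr coord i (l1, l2)"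
    using qpoly_bound_near_axis[OF assms(1-3)] by blast
  show ?thesis
  proof (rule has_real_derivative_0_if_powr_bound[where d = 1])
    show "qpoly ts (upd i (0 powr c) v) = 0"
      using assms(3) by (intro qpoly_eq_0_on_axes) (auto simp: upd_def)
    fix t :: real assume t: "0 < t" "t < 1"
    have "t powr c \<le> 1" using t \<open>0 < c\<close> by (intro powr_le1) auto
    then show "\<bar>qpoly ts (upd i (t powr c) v)\<bar> \<le> C * t powr (c * coord i (l1, l2))"
      using C[of "t powr c"] by (simp add: powr_powr)
  qed (use assms(5) in auto)
qed

lemma has_real_derivative_qpoly_powr:
  assumes "graded d l1 l2 ts" "1 < l1" "1 < l2" "v \<in> Qd" "i \<in> {1, 2}" "0 < c" "0 < s"
  shows "((\<lambda>t. qpoly ts (upd i (t powr c) v)) has_real_derivative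
           qpoly (rescale i c (dpoly i ts)) (upd i (s powr c) v)) (at s)"
proof -
  define w where "w = upd i (s powr c) v"
  have "w \<in> Qd" using assms(4) by (auto simp: w_def upd_def mem_Qd_iff)
  have "at (s powr c) within {0..} = at (s powr c)"
    using \<open>0 < s\<close> by (intro at_within_interior) auto
  then have "((\<lambda>x. qpoly ts (upd i x w)) has_real_derivative qpoly (dpoly i ts) w) (at (s powr c))"
    using has_real_derivative_qpoly_partial[OF assms(1-3) \<open>w \<in> Qd\<close> assms(5)] by (simp add: w_def)
  from DERIV_chain'[OF has_real_derivative_powr[OF \<open>0 < s\<close>, of c] this]
  have "((\<lambda>t. qpoly ts (upd i (t powr c) v)) has_real_derivative
      qpoly (dpoly i ts) w * (c * s powr (c - 1))) (at s)"
    by (simp add: w_def)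
  then show ?thesis
    using qpoly_rescale[OF \<open>0 < s\<close> \<open>0 < c\<close> assms(5), of "dpoly i ts" v] by (simp add: w_def)
qed

lemma has_real_derivative_qpoly_reparam_partial:
  assumes "graded d l1 l2 ts" "1 < l1" "1 < l2" "0 < c1" "0 < c2" "1 < c1 * l1" "1 < c2 * l2"
    and "u \<in> Qd" "i \<in> {1, 2}"
  shows "((\<lambda>t. qpoly ts (reparam c1 c2 (upd i t u))) has_real_derivative
           qpoly (rescale i (coord i (c1, c2)) (dpoly i ts)) (reparam c1 c2 u)) (at (coord i u) within {0..})"
proof -
  define c where "c = coord i (c1, c2)"
  define v where "v = reparam c1 c2 u"
  have "0 < c" "1 < c * coord i (l1, l2)"
    using assms by (auto simp: c_def coord_def)
  have "v \<in> Qd" using assms(8) by (simp add: v_def reparam_def mem_Qd_iff)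
  have v_eq: "v = upd i (coord i u powr c) v"
    using assms(9) by (auto simp: v_def c_def reparam_def coord_def upd_def)
  have f_eq: "(\<lambda>t. qpoly ts (reparam c1 c2 (upd i t u))) = (\<lambda>t. qpoly ts (upd i (t powr c) v))"
    using assms(9) by (simp add: reparam_upd c_def v_def)
  show ?thesis
  proof (cases "coord i u = 0")
    case True
    then have "coord i v = 0"
      using arg_cong[where f = "coord i", OF v_eq] by simp
    then have "qpoly (rescale i c (dpoly i ts)) v = 0"
      using assms(9) by (intro qpoly_eq_0_on_axes) (auto simp: coord_def)
    then show ?thesis
      using has_real_derivative_qpoly_powr_at_axis[OF assms(1) \<open>v \<in> Qd\<close> assms(9) \<open>0 < c\<close>
          \<open>1 < c * coord i (l1, l2)\<close>] True f_eq
      by (simp add: c_def v_def)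
  next
    case False
    then have "0 < coord i u" using assms(8,9) by (auto simp: coord_def mem_Qd_iff)
    from has_real_derivative_qpoly_powr[OF assms(1-3) \<open>v \<in> Qd\<close> assms(9) \<open>0 < c\<close> this]
    show ?thesis
      unfolding f_eq v_eq[symmetric] by (auto simp: c_def v_def intro: has_field_derivative_at_within)
  qed
qed

section \<open>Lipschitz estimates\<close>

lemma lipschitz_on_interval_if_derivative_bound:
  fixes f f' :: "real \<Rightarrow> real"
  assumes "continuous_on {a..b} f"
    and f': "\<And>x. a < x \<Longrightarrow> x < b \<Longrightarrow> (f has_real_derivative f' x) (at x)"
    and "\<And>x. a < x \<Longrightarrow> x < b \<Longrightarrow> \<bar>f' x\<bar> \<le> L" "0 \<le> L"
  shows "L-lipschitz_on {a..b} f"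
proof (rule lipschitz_on_leI)
  fix x y assume xy: "x \<in> {a..b}" "y \<in> {a..b}" "x \<le> y"
  show "dist (f x) (f y) \<le> L * dist x y"
  proof (cases "x = y")
    case False
    have "norm (f y - f x) \<le> L * y - L * x"
    proof (rule differentiable_bound_general[where f' = f' and \<phi>' = "\<lambda>_. L"])
      show "continuous_on {x..y} f"
        using assms(1) by (rule continuous_on_subset) (use xy in auto)
      fix z assume "x < z" "z < y"
      then show "(f has_vector_derivative f' z) (at z)" "((\<lambda>z. L * z) has_vector_derivative L) (at z)"
          "norm (f' z) \<le> L"
        using xy f'[of z] assms(3)[of z]
        by (auto simp: has_real_derivative_iff_has_vector_derivative[symmetric] intro!: derivative_eq_intros)
    qed (use xy False in \<open>auto intro!: continuous_intros\<close>)
    then show ?thesis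
      using xy by (simp add: dist_real_def abs_minus_commute right_diff_distrib)
  qed (simp add: \<open>0 \<le> L\<close>)
qed fact

lemma lipschitz_on_Times_if_separately:
  fixes f :: "'a::metric_space \<times> 'b::metric_space \<Rightarrow> 'c::metric_space"
  assumes "\<And>y. y \<in> B \<Longrightarrow> L1-lipschitz_on A (\<lambda>x. f (x, y))"
    and "\<And>x. x \<in> A \<Longrightarrow> L2-lipschitz_on B (\<lambda>y. f (x, y))"
    and "0 \<le> L1" "0 \<le> L2"
  shows "(L1 + L2)-lipschitz_on (A \<times> B) f"
proof (rule lipschitz_onI)
  fix p q assume "p \<in> A \<times> B" "q \<in> A \<times> B"
  then obtain x y x' y' where pq: "p = (x, y)" "q = (x', y')" "x \<in> A" "x' \<in> A" "y \<in> B" "y' \<in> B"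
    by auto
  have "dist (f p) (f q) \<le> dist (f (x, y)) (f (x', y)) + dist (f (x', y)) (f (x', y'))"
    unfolding pq by (rule dist_triangle)
  also have "\<dots> \<le> L1 * dist x x' + L2 * dist y y'"
    using pq by (intro add_mono lipschitz_onD[OF assms(1)] lipschitz_onD[OF assms(2)])
  also have "\<dots> \<le> L1 * dist p q + L2 * dist p q"
    using pq dist_fst_le[of p q] dist_snd_le[of p q] assms(3,4)
    by (intro add_mono mult_left_mono) auto
  finally show "dist (f p) (f q) \<le> (L1 + L2) * dist p q"
    by (simp add: distrib_right)
qed (use assms in simp)

lemma locally_lipschitz_on_Qd_if_lipschitz_on_squares:
  assumes "\<And>R. 0 \<le> R \<Longrightarrow> \<exists>L. L-lipschitz_on ({0..R} \<times> {0..R}) f"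
  shows "locally_lipschitz_on Qd f"
  unfolding locally_lipschitz_on_def
proof
  fix p :: "real \<times> real" assume "p \<in> Qd"
  define R where "R = norm p + 1"
  obtain L where L: "L-lipschitz_on ({0..R} \<times> {0..R}) f"
    using assms[of R] by (auto simp: R_def)
  have "cball p 1 \<inter> Qd \<subseteq> {0..R} \<times> {0..R}"
  proof
    fix q assume q: "q \<in> cball p 1 \<inter> Qd"
    then have "norm q \<le> R"
      using norm_triangle_ineq2[of q p] by (auto simp: R_def dist_norm norm_minus_commute)
    moreover have "\<bar>fst q\<bar> \<le> norm q" "\<bar>snd q\<bar> \<le> norm q"
      using norm_fst_le[of "fst q" "snd q"] norm_snd_le[of "snd q" "fst q"] by simp_all
    ultimately show "q \<in> {0..R} \<times> {0..R}"
      using q by (auto simp: mem_Qd_iff mem_Times_iff)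
  qed
  then have "L-lipschitz_on (cball p 1 \<inter> Qd) f"
    using L by (rule lipschitz_on_subset[rotated])
  then show "\<exists>e>0. \<exists>L. L-lipschitz_on (cball p e \<inter> Qd) f"
    by (intro exI[of _ 1]) auto
qed

lemma lipschitz_on_powr_mult_powr:
  fixes X e c q R :: real
  assumes "0 \<le> X" "1 \<le> e" "0 < c" "0 \<le> q" "0 \<le> R"
  shows "(e * R powr (e - 1) + q * c * R powr (e + c - 1))-lipschitz_on {0..R}
           (\<lambda>t. t powr e * (1 + X + t powr c) powr (- q))"
proof (rule lipschitz_on_interval_if_derivative_bound)
  let ?W = "\<lambda>t. 1 + X + t powr c"
  have W_pos: "0 < ?W t" for t using \<open>0 \<le> X\<close> by (simp add: add_pos_nonneg)
  have "continuous_on {0..R} (\<lambda>t. t powr e)" "continuous_on {0..R} (\<lambda>t. t powr c)"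
    by (rule continuous_on_powr', (use assms in \<open>auto intro: continuous_intros\<close>))+
  moreover have "?W t \<noteq> 0" for t
    using W_pos[of t] by simp
  with \<open>continuous_on {0..R} (\<lambda>t. t powr c)\<close> have "continuous_on {0..R} (\<lambda>t. ?W t powr (- q))"
    by (intro continuous_on_powr[OF continuous_on_add[OF continuous_on_const]] continuous_on_const) auto
  ultimately show "continuous_on {0..R} (\<lambda>t. t powr e * ?W t powr (- q))"
    by (intro continuous_on_mult) auto
  fix t assume t: "0 < t" "t < R"
  show "((\<lambda>t. t powr e * ?W t powr (- q)) has_real_derivative
      e * t powr (e - 1) * ?W t powr (- q) - q * c * (t powr e * t powr (c - 1)) * ?W t powr (- q - 1)) (at t)"
    using t W_pos[of t]
    by (auto intro!: derivative_eq_intros simp: algebra_simps)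
  have W_le: "?W t powr (- a) \<le> 1" if "0 \<le> a" for a
    using powr_mono[of "- a" 0 "?W t"] that assms(1) W_pos[of t] by simp
  have "t powr (e - 1) * ?W t powr (- q) \<le> R powr (e - 1) * 1"
    using assms t W_le[OF \<open>0 \<le> q\<close>] by (intro mult_mono powr_mono2) auto
  then have A: "0 \<le> e * t powr (e - 1) * ?W t powr (- q)"
    "e * t powr (e - 1) * ?W t powr (- q) \<le> e * R powr (e - 1)"
    using assms(2) by (auto simp: mult.assoc intro: mult_left_mono)
  have tt: "t powr e * t powr (c - 1) = t powr (e + c - 1)"
    by (simp add: powr_add[symmetric] add_diff_eq)
  have "t powr e * t powr (c - 1) * ?W t powr (- q - 1) \<le> R powr (e + c - 1) * 1"
    unfolding tt using assms t W_le[of "q + 1"] by (intro mult_mono powr_mono2) auto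
  then have B: "0 \<le> q * c * (t powr e * t powr (c - 1)) * ?W t powr (- q - 1)"
    "q * c * (t powr e * t powr (c - 1)) * ?W t powr (- q - 1) \<le> q * c * R powr (e + c - 1)"
    using assms(3,4) by (auto simp: mult.assoc intro: mult_left_mono)
  show "\<bar>e * t powr (e - 1) * ?W t powr (- q) - q * c * (t powr e * t powr (c - 1)) * ?W t powr (- q - 1)\<bar>
      \<le> e * R powr (e - 1) + q * c * R powr (e + c - 1)"
    using A B by linarith
next
  show "0 \<le> e * R powr (e - 1) + q * c * R powr (e + c - 1)"
    using assms by simp
qed

lemma lipschitz_on_square_qmonom_reparam:
  assumes "0 < c1" "0 < c2" "1 \<le> c1 * k1" "1 \<le> c2 * k2" "0 \<le> n" "0 \<le> R"
  shows "\<exists>L. L-lipschitz_on ({0..R} \<times> {0..R}) (\<lambda>u. qmonom k1 k2 n (reparam c1 c2 u))"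
proof -
  define L1 where "L1 = c1 * k1 * R powr (c1 * k1 - 1) + n * c1 * R powr (c1 * k1 + c1 - 1)"
  define L2 where "L2 = c2 * k2 * R powr (c2 * k2 - 1) + n * c2 * R powr (c2 * k2 + c2 - 1)"
  have eq: "qmonom k1 k2 n (reparam c1 c2 (x, y)) =
      x powr (c1 * k1) * y powr (c2 * k2) * (1 + x powr c1 + y powr c2) powr (- n)" for x y
    by (simp add: qmonom_def reparam_def powr_powr)
  have "0 \<le> L1" "0 \<le> L2"
    using assms by (simp_all add: L1_def L2_def)
  have "(R powr (c2 * k2) * L1)-lipschitz_on {0..R} (\<lambda>x. qmonom k1 k2 n (reparam c1 c2 (x, y)))"
    if "y \<in> {0..R}" for y
  proof -
    have "L1-lipschitz_on {0..R} (\<lambda>x. x powr (c1 * k1) * (1 + y powr c2 + x powr c1) powr (- n))"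
      unfolding L1_def using assms by (intro lipschitz_on_powr_mult_powr) auto
    then have "(R powr (c2 * k2) * L1)-lipschitz_on {0..R}
        (\<lambda>x. y powr (c2 * k2) * (x powr (c1 * k1) * (1 + y powr c2 + x powr c1) powr (- n)))"
      using that assms by (intro lipschitz_on_cmult_real_upper) (auto intro: powr_mono2)
    then show ?thesis
      by (simp add: eq ac_simps)
  qed
  moreover have "(R powr (c1 * k1) * L2)-lipschitz_on {0..R} (\<lambda>y. qmonom k1 k2 n (reparam c1 c2 (x, y)))"
    if "x \<in> {0..R}" for x
  proof -
    have "L2-lipschitz_on {0..R} (\<lambda>y. y powr (c2 * k2) * (1 + x powr c1 + y powr c2) powr (- n))"
      unfolding L2_def using assms by (intro lipschitz_on_powr_mult_powr) auto
    then have "(R powr (c1 * k1) * L2)-lipschitz_on {0..R}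
        (\<lambda>y. x powr (c1 * k1) * (y powr (c2 * k2) * (1 + x powr c1 + y powr c2) powr (- n)))"
      using that assms by (intro lipschitz_on_cmult_real_upper) (auto intro: powr_mono2)
    then show ?thesis
      by (simp add: eq ac_simps)
  qed
  ultimately have "(R powr (c2 * k2) * L1 + R powr (c1 * k1) * L2)-lipschitz_on ({0..R} \<times> {0..R})
      (\<lambda>u. qmonom k1 k2 n (reparam c1 c2 u))"
    using \<open>0 \<le> L1\<close> \<open>0 \<le> L2\<close>
    by (intro lipschitz_on_Times_if_separately[where f = "\<lambda>u. qmonom k1 k2 n (reparam c1 c2 u)"]) auto
  then show ?thesis ..
qed

lemma locally_lipschitz_on_qpoly_reparam:
  assumes "graded d l1 l2 ts" "0 < c1" "0 < c2" "1 \<le> c1 * l1" "1 \<le> c2 * l2"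
  shows "locally_lipschitz_on Qd (\<lambda>u. qpoly ts (reparam c1 c2 u))"
proof (rule locally_lipschitz_on_Qd_if_lipschitz_on_squares)
  fix R :: real assume "0 \<le> R"
  show "\<exists>L. L-lipschitz_on ({0..R} \<times> {0..R}) (\<lambda>u. qpoly ts (reparam c1 c2 u))"
    using assms(1)
  proof (induction ts rule: qterms_induct)
    case Nil
    then show ?case using lipschitz_on_constant by auto
  next
    case (Cons c k1 k2 n ts)
    have "c1 * l1 \<le> c1 * k1" "c2 * l2 \<le> c2 * k2"
      using Cons.prems assms(2,3) by (auto intro: mult_left_mono)
    then have "1 \<le> c1 * k1" "1 \<le> c2 * k2"
      using assms(4,5) by linarith+
    moreover have "0 \<le> n"
      using Cons.prems by simp
    ultimately obtain L where "L-lipschitz_on ({0..R} \<times> {0..R}) (\<lambda>u. qmonom k1 k2 n (reparam c1 c2 u))"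
      using lipschitz_on_square_qmonom_reparam[OF assms(2,3) _ _ _ \<open>0 \<le> R\<close>] by blast
    moreover obtain L' where "L'-lipschitz_on ({0..R} \<times> {0..R}) (\<lambda>u. qpoly ts (reparam c1 c2 u))"
      using Cons by auto
    ultimately have "(\<bar>c\<bar> * L + L')-lipschitz_on ({0..R} \<times> {0..R})
        (\<lambda>u. c * qmonom k1 k2 n (reparam c1 c2 u) + qpoly ts (reparam c1 c2 u))"
      by (intro lipschitz_on_add lipschitz_on_cmult_real)
    then show ?case
      by auto
  qed
qed

section \<open>Sufficiency\<close>

lemma rpow_nonneg: "0 \<le> r \<Longrightarrow> 0 \<le> rpow r b"
  by (simp add: rpow_def)

lemma continuous_on_rpow:
  assumes "0 \<le> b"
  shows "continuous_on {0..} (\<lambda>r. rpow r b)"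
proof (cases "b = 0")
  case True
  then have "(\<lambda>r. rpow r b) = (\<lambda>r. 1)" by (auto simp: rpow_def fun_eq_iff)
  then show ?thesis by (simp only: continuous_on_const)
next
  case False
  then have "continuous_on {0..} (\<lambda>r::real. r powr b)"
    using assms by (intro continuous_on_powr') (auto intro: continuous_intros)
  moreover have "rpow r b = r powr b" for r using False by (simp add: rpow_def)
  ultimately show ?thesis by simp
qed

text \<open>For a = 2 the convention rpow 0 0 = 1 is what makes this true at r = 0.\<close>

lemma has_real_derivative_powr_minus_1:
  assumes "2 \<le> a" "0 \<le> r"
  shows "((\<lambda>r. r powr (a - 1)) has_real_derivative (a - 1) * rpow r (a - 2)) (at r within {0..})"
proof (cases "a = 2")
  case True
  have "((\<lambda>r. r powr (a - 1)) has_real_derivative 1) (at r within {0..})"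
  proof (rule has_field_derivative_transform_within[OF DERIV_ident zero_less_one])
    show "r \<in> {0..}" using assms by simp
    fix x :: real assume "x \<in> {0..}"
    then show "x = x powr (a - 1)" using True by simp
  qed
  moreover have "(a - 1) * rpow r (a - 2) = 1"
    using True by (simp add: rpow_def)
  ultimately show ?thesis by simp
next
  case False
  then have "((\<lambda>r. r powr (a - 1)) has_real_derivative (a - 1) * r powr (a - 1 - 1)) (at r within {0..})"
    using assms by (intro has_real_derivative_powr_nonneg) auto
  moreover have "rpow r (a - 2) = r powr (a - 1 - 1)"
    using False by (simp add: rpow_def diff_diff_add)
  ultimately show ?thesis by (simp only:)
qed

lemma Liminf_second_derivative_powr_pos:
  assumes "2 \<le> a"
  shows "0 < Liminf at_top (\<lambda>r. ereal ((a - 1) * rpow r (a - 2)))"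
proof -
  have "\<forall>\<^sub>F r in at_top. ereal (a - 1) \<le> ereal ((a - 1) * rpow r (a - 2))"
    using eventually_ge_at_top[of 1]
  proof eventually_elim
    case (elim r)
    then have "1 \<le> rpow r (a - 2)"
      using assms by (simp add: rpow_def ge_one_powr_ge_zero)
    then show ?case using assms by simp
  qed
  then have "ereal (a - 1) \<le> Liminf at_top (\<lambda>r. ereal ((a - 1) * rpow r (a - 2)))"
    by (rule Liminf_bounded)
  then show ?thesis
    using assms by (simp add: less_le_trans[of 0 "ereal (a - 1)"])
qed

lemma Limsup_log_derivative_powr_finite:
  assumes "0 < a"
  shows "Limsup at_top (\<lambda>r. ereal (r powr (a - 1) / (r powr a / a))) < \<infinity>"
proof -
  have "\<forall>\<^sub>F r in at_top. ereal (r powr (a - 1) / (r powr a / a)) \<le> ereal a"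
    using eventually_ge_at_top[of 1]
  proof eventually_elim
    case (elim r)
    then have "r powr (a - 1) / (r powr a / a) = a / r"
      by (simp add: powr_diff)
    also have "\<dots> \<le> a" using elim assms by (simp add: divide_le_eq)
    finally show ?case by simp
  qed
  then have "Limsup at_top (\<lambda>r. ereal (r powr (a - 1) / (r powr a / a))) \<le> ereal a"
    by (rule Limsup_bounded)
  then show ?thesis
    by (rule le_less_trans) simp
qed

lemma cond_F_powr:
  assumes "2 \<le> a"
  shows "cond_F (\<lambda>r. r powr a / a) (\<lambda>r. r powr (a - 1)) (\<lambda>r. (a - 1) * rpow r (a - 2))"
proof -
  have F': "((\<lambda>r. r powr a / a) has_real_derivative r powr (a - 1)) (at r within {0..})" if "0 \<le> r" for r
    using DERIV_cdivide[OF has_real_derivative_powr_nonneg[of a r], of a] assms that by simp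
  have ineq: "0 \<le> r powr a / a - r * r powr (a - 1) + r\<^sup>2 * ((a - 1) * rpow r (a - 2))" if "0 \<le> r" for r
  proof (cases "r = 0")
    case False
    have "r * r powr (a - 1) = r powr a" "r\<^sup>2 * rpow r (a - 2) = r powr a"
      using False that by (simp_all add: rpow_def powr_diff power2_eq_square)
    then have "r powr a / a - r * r powr (a - 1) + r\<^sup>2 * ((a - 1) * rpow r (a - 2)) =
        r powr a * (1 / a + a - 2)"
      by (simp add: algebra_simps)
    moreover have "0 \<le> 1 / a + a - 2" using assms by (simp add: add_increasing)
    ultimately show ?thesis by simp
  qed (use assms in simp)
  have "continuous_on {0..} (\<lambda>r. (a - 1) * rpow r (a - 2))"
    using continuous_on_rpow[of "a - 2"] assms by (intro continuous_on_mult_left) auto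
  moreover have "0 < (a - 1) * rpow r (a - 2)" if "0 < r" for r
    using assms that by (simp add: rpow_def)
  ultimately show ?thesis
    unfolding cond_F_def C2_nonneg_def
    using F' has_real_derivative_powr_minus_1[OF assms] Liminf_second_derivative_powr_pos[OF assms]
      Limsup_log_derivative_powr_finite ineq assms
    by simp
qed

lemma near0_F_powr: "2 \<le> a \<Longrightarrow> near0_F (\<lambda>r. (a - 1) * rpow r (a - 2)) 1"
  unfolding near0_F_def by (intro exI[of _ "a - 1"] exI[of _ "a - 2"]) auto

lemma cond_h_qpoly:
  assumes "graded d l1 l2 ts" "2 < l1" "2 < l2"
  shows "cond_h (qpoly ts) (\<lambda>j. qpoly (dpoly j ts)) (\<lambda>j i. qpoly (dpoly i (dpoly j ts)))"
proof -
  have g1: "graded (d - 1) (l1 - of_bool (j = 1)) (l2 - of_bool (j \<noteq> 1)) (dpoly j ts)" for j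
    using assms(1) by (rule graded_dpoly)
  have "(qpoly ts has_derivative (\<lambda>v. fst v * qpoly (dpoly 1 ts) p + snd v * qpoly (dpoly 2 ts) p))
      (at p within Qd)" if "p \<in> Qd" for p
    using assms that by (intro has_derivative_qpoly) auto
  moreover have "(qpoly (dpoly j ts) has_derivative
      (\<lambda>v. fst v * qpoly (dpoly 1 (dpoly j ts)) p + snd v * qpoly (dpoly 2 (dpoly j ts)) p)) (at p within Qd)"
    if "p \<in> Qd" for p j
    using g1 assms that by (intro has_derivative_qpoly) auto
  moreover have "continuous_on Qd (qpoly (dpoly i (dpoly j ts)))" for i j
    using graded_dpoly[OF g1[of j], of i] assms by (intro continuous_on_qpoly) auto
  ultimately show ?thesis
    unfolding cond_h_def C2_quadrant_def by (simp add: qpoly_eq_0_on_axes)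
qed

lemma inv_into_powr:
  fixes a t :: real
  assumes "1 < a" "0 \<le> t"
  shows "inv_into {0..} (\<lambda>r. r powr (a - 1)) t = t powr (1 / (a - 1))"
proof (rule inv_into_f_eq)
  have inv: "(z powr (a - 1)) powr (1 / (a - 1)) = z" if "0 \<le> z" for z :: real
    using assms that by (simp add: powr_powr)
  show "inj_on (\<lambda>r. r powr (a - 1)) {0..}"
    by (rule inj_on_inverseI[where g = "\<lambda>t. t powr (1 / (a - 1))"]) (simp add: inv)
  show "(t powr (1 / (a - 1))) powr (a - 1) = t"
    using assms by (simp add: powr_powr)
qed simp

lemma theta_qpoly:
  assumes "1 < a1" "1 < a2" "u \<in> Qd"
  shows "theta (\<lambda>r. r powr (a1 - 1)) (\<lambda>r. r powr (a2 - 1)) (\<lambda>j. qpoly (dpoly j ts)) j u =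
           qpoly (dpoly j ts) (reparam (1 / (a1 - 1)) (1 / (a2 - 1)) u)"
  using assms by (simp add: theta_def reparam_def inv_into_powr mem_Qd_iff)

lemma theta_partial_qpoly:
  assumes "2 \<le> a1" "2 \<le> a2" "graded d l1 l2 ts" "2 * a1 - 1 \<le> l1" "2 * a2 - 1 \<le> l2"
    and "i \<in> {1, 2}" "j \<in> {1, 2}"
  shows "\<exists>\<theta>. (\<forall>u\<in>Qd. ((\<lambda>t. theta (\<lambda>r. r powr (a1 - 1)) (\<lambda>r. r powr (a2 - 1)) (\<lambda>j. qpoly (dpoly j ts)) j
                         (upd i t u)) has_real_derivative \<theta> u) (at (coord i u) within {0..})) \<and>
             locally_lipschitz_on Qd \<theta>"
proof -
  define c1 c2 where "c1 = 1 / (a1 - 1)" and "c2 = 1 / (a2 - 1)"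
  define c where "c = coord i (c1, c2)"
  define L1 L2 where "L1 = l1 - of_bool (j = 1)" and "L2 = l2 - of_bool (j \<noteq> 1)"
  have g: "graded (d - 1) L1 L2 (dpoly j ts)"
    unfolding L1_def L2_def using assms(3) by (rule graded_dpoly)
  have c_le_iff: "1 \<le> 1 / (a - 1) * L \<longleftrightarrow> a - 1 \<le> L" "1 < 1 / (a - 1) * L \<longleftrightarrow> a - 1 < L"
    if "1 < a" for a L :: real
    using that by (simp_all add: field_simps)
  have "0 < c1" "0 < c2" "0 < c" "1 < L1" "1 < L2" "1 < c1 * L1" "1 < c2 * L2"
    using assms by (auto simp: c1_def c2_def c_def coord_def L1_def L2_def c_le_iff)
  define \<theta> where "\<theta> = (\<lambda>u. qpoly (rescale i c (dpoly i (dpoly j ts))) (reparam c1 c2 u))"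
  have "((\<lambda>t. theta (\<lambda>r. r powr (a1 - 1)) (\<lambda>r. r powr (a2 - 1)) (\<lambda>j. qpoly (dpoly j ts)) j (upd i t u))
      has_real_derivative \<theta> u) (at (coord i u) within {0..})" if "u \<in> Qd" for u
  proof (rule has_field_derivative_transform_within[OF _ zero_less_one])
    show "((\<lambda>t. qpoly (dpoly j ts) (reparam c1 c2 (upd i t u))) has_real_derivative \<theta> u)
        (at (coord i u) within {0..})"
      unfolding \<theta>_def c_def
      using has_real_derivative_qpoly_reparam_partial[OF g] \<open>1 < L1\<close> \<open>1 < L2\<close> \<open>0 < c1\<close> \<open>0 < c2\<close>
        \<open>1 < c1 * L1\<close> \<open>1 < c2 * L2\<close> that assms(6) by blast
    show "coord i u \<in> {0..}"
      using that assms(6) by (auto simp: coord_def mem_Qd_iff)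
    fix t :: real assume "t \<in> {0..}"
    then have "upd i t u \<in> Qd"
      using that by (auto simp: upd_def mem_Qd_iff)
    then show "qpoly (dpoly j ts) (reparam c1 c2 (upd i t u)) =
        theta (\<lambda>r. r powr (a1 - 1)) (\<lambda>r. r powr (a2 - 1)) (\<lambda>j. qpoly (dpoly j ts)) j (upd i t u)"
      using assms(1,2) by (simp add: theta_qpoly c1_def c2_def)
  qed
  moreover have "locally_lipschitz_on Qd \<theta>"
    unfolding \<theta>_def
  proof (rule locally_lipschitz_on_qpoly_reparam[OF graded_rescale[OF graded_dpoly[OF g]]])
    show "1 \<le> c1 * (L1 - of_bool (i = 1) + of_bool (i = 1) * (1 - 1 / c))"
      "1 \<le> c2 * (L2 - of_bool (i \<noteq> 1) + of_bool (i \<noteq> 1) * (1 - 1 / c))"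
      using assms by (auto simp: c1_def c2_def c_def coord_def L1_def L2_def c_le_iff)
  qed (use \<open>0 < c1\<close> \<open>0 < c2\<close> in auto)
  ultimately show ?thesis by blast
qed

lemma abs_qpoly_le_min:
  assumes "graded d l1 l2 ts" "0 < x" "0 < y"
    and "p1 \<le> l1" "p2 \<le> l2" "d \<le> p1 + p2"
    and "0 \<le> q1" "p1 + q1 \<le> l1" "0 \<le> q2" "p2 + q2 \<le> l2"
    and "0 \<le> s1 + s2" "p1 + s1 \<le> l1" "p2 + s2 \<le> l2"
  shows "\<bar>qpoly ts (x, y)\<bar> \<le> coeff_norm ts * (x powr p1 * y powr p2) *
           min 1 (min (x powr q1) (min (y powr q2) (x powr s1 * y powr s2)))"
proof -
  let ?K = "coeff_norm ts * (x powr p1 * y powr p2)"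
  have "0 \<le> ?K" by (simp add: coeff_norm_nonneg)
  have "\<bar>qpoly ts (x, y)\<bar> \<le> ?K"
    using abs_qpoly_le[OF assms(1-3), of p1 p2] assms by simp
  moreover have "\<bar>qpoly ts (x, y)\<bar> \<le> ?K * x powr q1"
    using abs_qpoly_le[OF assms(1-3), of "p1 + q1" p2] assms by (simp add: powr_add mult_ac)
  moreover have "\<bar>qpoly ts (x, y)\<bar> \<le> ?K * y powr q2"
    using abs_qpoly_le[OF assms(1-3), of p1 "p2 + q2"] assms by (simp add: powr_add mult_ac)
  moreover have "\<bar>qpoly ts (x, y)\<bar> \<le> ?K * (x powr s1 * y powr s2)"
    using abs_qpoly_le[OF assms(1-3), of "p1 + s1" "p2 + s2"] assms by (simp add: powr_add mult_ac)
  ultimately show ?thesis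
    using \<open>0 \<le> ?K\<close> by (simp add: min_mult_distrib_left)
qed

lemma sqrt_coord_divide_eq_powr:
  fixes x y :: real
  assumes "0 < x" "0 < y" "i \<in> {1, 2}" "j \<in> {1, 2}"
  shows "sqrt (coord i (x, y) / coord j (x, y)) =
           x powr ((of_bool (i = 1) - of_bool (j = 1)) / 2) * y powr (- (of_bool (i = 1) - of_bool (j = 1)) / 2)"
proof -
  have "sqrt (u / v) = u powr (1 / 2) * v powr (- 1 / 2)" if "0 < u" "0 < v" for u v :: real
    using that by (simp add: powr_half_sqrt[symmetric] powr_minus_divide powr_divide)
  then show ?thesis
    using assms by (auto simp: coord_def mult.commute powr_add[symmetric])
qed

lemma abs_qpoly_second_partial_le:
  assumes "2 \<le> a1" "2 \<le> a2" "graded d l1 l2 ts" "2 * a1 - 1 \<le> l1" "2 * a2 - 1 \<le> l2" "d \<le> a1" "d \<le> a2"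
    and "i \<in> {1, 2}" "j \<in> {1, 2}" "0 < x" "0 < y"
  shows "\<bar>qpoly (dpoly i (dpoly j ts)) (x, y)\<bar> \<le>
           coeff_norm (dpoly i (dpoly j ts)) * rpow (coord i (x, y)) (coord i (a1, a2) - 2) *
           min 1 (min (x powr (a1 - 1)) (min (y powr (a2 - 1)) (sqrt (coord i (x, y) / coord j (x, y)))))"
proof -
  have g: "graded (d - 1 - 1) (l1 - of_bool (j = 1) - of_bool (i = 1)) (l2 - of_bool (j \<noteq> 1) - of_bool (i \<noteq> 1))
      (dpoly i (dpoly j ts))"
    using assms(3) by (intro graded_dpoly)
  define p1 p2 where "p1 = of_bool (i = 1) * (a1 - 2)" and "p2 = of_bool (i \<noteq> 1) * (a2 - 2)"
  define s :: real where "s = (of_bool (i = 1) - of_bool (j = 1)) / 2"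
  have "x powr p1 * y powr p2 = rpow (coord i (x, y)) (coord i (a1, a2) - 2)"
    using assms(8,10,11) by (auto simp: p1_def p2_def coord_def rpow_def)
  moreover have "x powr s * y powr (- s) = sqrt (coord i (x, y) / coord j (x, y))"
    using sqrt_coord_divide_eq_powr[OF assms(10,11,8,9)] by (simp add: s_def minus_divide_left)
  moreover have "\<bar>qpoly (dpoly i (dpoly j ts)) (x, y)\<bar> \<le> coeff_norm (dpoly i (dpoly j ts)) * (x powr p1 * y powr p2) *
      min 1 (min (x powr (a1 - 1)) (min (y powr (a2 - 1)) (x powr s * y powr (- s))))"
    using assms(1,2,4-9) by (intro abs_qpoly_le_min[OF g assms(10,11)]) (auto simp: p1_def p2_def s_def)
  ultimately show ?thesis by simp
qed

lemma second_partial_bound_qpoly: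
  assumes "2 \<le> a1" "2 \<le> a2" "graded d l1 l2 ts" "2 * a1 - 1 \<le> l1" "2 * a2 - 1 \<le> l2" "d \<le> a1" "d \<le> a2"
    and "i \<in> {1, 2}" "j \<in> {1, 2}"
  shows "\<exists>\<kappa>>0. \<forall>r\<in>Qd. \<bar>qpoly (dpoly i (dpoly j ts)) r\<bar> \<le>
           \<kappa> * (if i = 1 then (\<lambda>r. (a1 - 1) * rpow r (a1 - 2)) else (\<lambda>r. (a2 - 1) * rpow r (a2 - 2))) (coord i r) *
           min 1 (min (fst r powr (a1 - 1)) (min (snd r powr (a2 - 1)) (sqrt (coord i r / coord j r))))"
proof -
  define N where "N = coeff_norm (dpoly i (dpoly j ts))"
  define a where "a = coord i (a1, a2)"
  have "2 \<le> a" using assms by (auto simp: a_def coord_def)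
  define \<kappa> where "\<kappa> = (N + 1) / (a - 1)"
  have "0 < \<kappa>" using \<open>2 \<le> a\<close> by (simp add: \<kappa>_def N_def add_nonneg_pos coeff_norm_nonneg)
  have bound: "\<bar>qpoly (dpoly i (dpoly j ts)) r\<bar> \<le> \<kappa> * ((a - 1) * rpow (coord i r) (a - 2)) *
      min 1 (min (fst r powr (a1 - 1)) (min (snd r powr (a2 - 1)) (sqrt (coord i r / coord j r))))"
    if "r \<in> Qd" for r
  proof (cases "fst r = 0 \<or> snd r = 0")
    case True
    then show ?thesis
      using that \<open>0 < \<kappa>\<close> \<open>2 \<le> a\<close> by (simp add: qpoly_eq_0_on_axes rpow_nonneg coord_def mem_Qd_iff)
  next
    case False
    then obtain x y where r: "r = (x, y)" "0 < x" "0 < y"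
      using \<open>r \<in> Qd\<close> by (cases r) (auto simp: mem_Qd_iff)
    have "0 \<le> rpow (coord i r) (a - 2)"
      using r by (simp add: coord_def rpow_nonneg)
    moreover have "\<kappa> * ((a - 1) * rpow (coord i r) (a - 2)) = (N + 1) * rpow (coord i r) (a - 2)"
      using \<open>2 \<le> a\<close> by (simp add: \<kappa>_def)
    ultimately have "N * rpow (coord i r) (a - 2) \<le> \<kappa> * ((a - 1) * rpow (coord i r) (a - 2))"
      by (simp add: distrib_right)
    moreover have "\<bar>qpoly (dpoly i (dpoly j ts)) r\<bar> \<le> N * rpow (coord i r) (a - 2) *
        min 1 (min (fst r powr (a1 - 1)) (min (snd r powr (a2 - 1)) (sqrt (coord i r / coord j r))))"
      using abs_qpoly_second_partial_le[OF assms r(2,3)] r(1) by (simp add: N_def a_def)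
    moreover have "0 \<le> min 1 (min (fst r powr (a1 - 1)) (min (snd r powr (a2 - 1)) (sqrt (coord i r / coord j r))))"
      using r by (simp add: coord_def)
    ultimately show ?thesis
      by (meson mult_right_mono order_trans)
  qed
  have "(if i = 1 then (\<lambda>r. (a1 - 1) * rpow r (a1 - 2)) else (\<lambda>r. (a2 - 1) * rpow r (a2 - 2))) t =
      (a - 1) * rpow t (a - 2)" for t
    by (simp add: a_def coord_def)
  then show ?thesis
    using bound \<open>0 < \<kappa>\<close> by auto
qed

lemma all_conditions_qpoly:
  assumes "2 \<le> a1" "2 \<le> a2" "graded d l1 l2 ts" "2 * a1 - 1 \<le> l1" "2 * a2 - 1 \<le> l2" "d \<le> a1" "d \<le> a2"
  shows "all_conditions (\<lambda>r. r powr a1 / a1) (\<lambda>r. r powr a2 / a2) (qpoly ts)"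
proof -
  have "cond_theta (\<lambda>r. r powr (a1 - 1)) (\<lambda>r. (a1 - 1) * rpow r (a1 - 2))
      (\<lambda>r. r powr (a2 - 1)) (\<lambda>r. (a2 - 1) * rpow r (a2 - 2))
      (\<lambda>j. qpoly (dpoly j ts)) (\<lambda>j i. qpoly (dpoly i (dpoly j ts)))"
    unfolding cond_theta_def
    using theta_partial_qpoly[OF assms(1-5)] second_partial_bound_qpoly[OF assms] by simp
  moreover have "cond_h (qpoly ts) (\<lambda>j. qpoly (dpoly j ts)) (\<lambda>j i. qpoly (dpoly i (dpoly j ts)))"
    using assms by (intro cond_h_qpoly) auto
  ultimately show ?thesis
    unfolding all_conditions_def
    using cond_F_powr[OF assms(1)] cond_F_powr[OF assms(2)] near0_F_powr[OF assms(1)] near0_F_powr[OF assms(2)]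
    by (intro exI[of _ 1] exI conjI) auto
qed

section \<open>Necessity\<close>

lemma cond_F_has_derivative_at:
  assumes "cond_F F F' F''" "0 < t"
  shows "(F has_real_derivative F' t) (at t)" "(F' has_real_derivative F'' t) (at t)"
proof -
  have "at t within {0..} = at t"
    using assms(2) by (intro at_within_interior) auto
  moreover have "(F has_real_derivative F' t) (at t within {0..})" "(F' has_real_derivative F'' t) (at t within {0..})"
    using assms unfolding cond_F_def C2_nonneg_def by auto
  ultimately show "(F has_real_derivative F' t) (at t)" "(F' has_real_derivative F'' t) (at t)"
    by simp_all
qed

lemma cond_F_powr_derivatives:
  fixes a :: real
  assumes "0 < a" "cond_F (\<lambda>r. r powr a / a) F' F''"
  shows cond_F_powr_derivative1: "\<And>t. 0 < t \<Longrightarrow> F' t = t powr (a - 1)"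
    and cond_F_powr_derivative2: "\<And>t. 0 < t \<Longrightarrow> F'' t = (a - 1) * t powr (a - 2)"
proof -
  show F'_eq: "F' t = t powr (a - 1)" if "0 < t" for t
  proof (rule DERIV_unique[OF cond_F_has_derivative_at(1)[OF assms(2) that]])
    show "((\<lambda>r. r powr a / a) has_real_derivative t powr (a - 1)) (at t)"
      using DERIV_cdivide[OF has_real_derivative_powr[OF that, of a], of a] assms(1) by simp
  qed
  show "F'' t = (a - 1) * t powr (a - 2)" if "0 < t" for t
  proof (rule DERIV_unique[OF cond_F_has_derivative_at(2)[OF assms(2) that]])
    have "((\<lambda>r. r powr (a - 1)) has_real_derivative (a - 1) * t powr (a - 2)) (at t)"
      using has_real_derivative_powr[OF that, of "a - 1"] by (simp add: diff_diff_add)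
    then show "(F' has_real_derivative (a - 1) * t powr (a - 2)) (at t)"
      by (rule has_field_derivative_transform_within_open[where S = "{0<..}"]) (use that F'_eq in auto)
  qed
qed

lemma ge_2_if_near0_F:
  assumes "near0_F F'' r0" "0 < r0"
    and F''_eq: "\<And>t. 0 < t \<Longrightarrow> F'' t = (a - 1) * t powr (a - 2)"
    and F''_pos: "\<And>t. 0 < t \<Longrightarrow> 0 < F'' t"
  shows "2 \<le> a"
proof -
  obtain M \<beta> where "0 \<le> \<beta>" and bound: "\<And>r. 0 \<le> r \<Longrightarrow> r \<le> r0 \<Longrightarrow> F'' r \<le> M * rpow r \<beta>"
    using assms(1) unfolding near0_F_def by blast
  have "0 < (a - 1) * r0 powr (a - 2)"
    using F''_pos[OF \<open>0 < r0\<close>] F''_eq[OF \<open>0 < r0\<close>] by simp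
  then have "1 < a" by (simp add: zero_less_mult_iff)
  have "t powr (a - 2) \<le> M / (a - 1) * t powr \<beta>" if "0 < t" "t \<le> r0" for t
    using bound[of t] F''_eq[OF \<open>0 < t\<close>] that \<open>1 < a\<close> by (simp add: rpow_def field_simps)
  then have "\<beta> \<le> a - 2"
    by (rule exponent_le_if_powr_bounded_at_0[OF \<open>0 < r0\<close>])
  then show ?thesis using \<open>0 \<le> \<beta>\<close> by simp
qed

lemma C2_quadrant_line:
  assumes "C2_quadrant h Dh D2h" "j \<in> {1, 2}" "p \<in> Qd" "0 \<le> t"
  shows "((\<lambda>s. h (upd j s p)) has_real_derivative Dh j (upd j t p)) (at t within {0..})"
    and "((\<lambda>s. Dh j (upd j s p)) has_real_derivative D2h j j (upd j t p)) (at t within {0..})"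
proof -
  define q where "q = upd j t p"
  have "q \<in> Qd" using assms(3,4) by (auto simp: q_def upd_def mem_Qd_iff)
  have "((\<lambda>s. h (upd j s q)) has_real_derivative coord j (Dh 1 q, Dh 2 q)) (at (coord j q) within {0..})"
    using assms(1) \<open>q \<in> Qd\<close> unfolding C2_quadrant_def by (intro has_real_derivative_partial) auto
  then show "((\<lambda>s. h (upd j s p)) has_real_derivative Dh j (upd j t p)) (at t within {0..})"
    using assms(2) by (auto simp: q_def coord_def upd_def)
  have "((\<lambda>s. Dh j (upd j s q)) has_real_derivative coord j (D2h j 1 q, D2h j 2 q)) (at (coord j q) within {0..})"
    using assms(1,2) \<open>q \<in> Qd\<close> unfolding C2_quadrant_def by (intro has_real_derivative_partial) auto
  then show "((\<lambda>s. Dh j (upd j s p)) has_real_derivative D2h j j (upd j t p)) (at t within {0..})"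
    using assms(2) by (auto simp: q_def coord_def upd_def)
qed

lemma abs_le_powr_on_line:
  assumes "cond_h h Dh D2h" "j \<in> {1, 2}" "p \<in> Qd" "0 < X" "1 < e"
    and E: "\<And>t. 0 < t \<Longrightarrow> t < X \<Longrightarrow> \<bar>D2h j j (upd j t p)\<bar> \<le> C * t powr (e - 2)"
  shows "\<bar>h (upd j X p)\<bar> \<le> C / (e * (e - 1)) * X powr e"
proof (rule abs_le_powr_if_abs_second_derivative_le[OF assms(5,4) _ _ _ _ _ _ E])
  have "C2_quadrant h Dh D2h" using assms(1) by (simp add: cond_h_def)
  note line = C2_quadrant_line[OF this assms(2,3)]
  have "continuous_on {0..} (\<lambda>t. h (upd j t p))" "continuous_on {0..} (\<lambda>t. Dh j (upd j t p))"
    unfolding continuous_on_eq_continuous_within using line by (auto intro: DERIV_continuous)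
  then show "continuous_on {0..X} (\<lambda>t. h (upd j t p))" "continuous_on {0..X} (\<lambda>t. Dh j (upd j t p))"
    by (auto elim: continuous_on_subset)
  fix t :: real assume "0 < t"
  then have "at t within {0..} = at t" by (intro at_within_interior) auto
  then show "((\<lambda>t. h (upd j t p)) has_real_derivative Dh j (upd j t p)) (at t)"
    "((\<lambda>t. Dh j (upd j t p)) has_real_derivative D2h j j (upd j t p)) (at t)"
    using line[of t] \<open>0 < t\<close> by simp_all
next
  show "h (upd j 0 p) = 0" "Dh j (upd j 0 p) = 0"
    using assms(1-3) by (auto simp: cond_h_def upd_def mem_Qd_iff)
qed

lemma diagonal_second_partial_le:
  assumes "cond_theta F1' F1'' F2' F2'' Dh D2h" "j \<in> {1, 2}" "1 \<le> a"
    and F'_eq: "\<And>t. 0 < t \<Longrightarrow> (if j = 1 then F1' else F2') t = t powr (a - 1)"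
    and F''_eq: "\<And>t. 0 < t \<Longrightarrow> (if j = 1 then F1'' else F2'') t = (a - 1) * t powr (a - 2)"
  obtains \<kappa> where "0 < \<kappa>"
    "\<And>t p. 0 < t \<Longrightarrow> p \<in> Qd \<Longrightarrow> \<bar>D2h j j (upd j t p)\<bar> \<le> \<kappa> * (a - 1) * t powr (a - 2) * min 1 (t powr (a - 1))"
proof -
  obtain \<kappa> where "0 < \<kappa>" and \<kappa>: "\<forall>r\<in>Qd. \<bar>D2h j j r\<bar> \<le> \<kappa> * (if j = 1 then F1'' else F2'') (coord j r) *
      min 1 (min (F1' (fst r)) (min (F2' (snd r)) (sqrt (coord j r / coord j r))))"
    using assms(1,2) unfolding cond_theta_def by blast
  have "\<bar>D2h j j (upd j t p)\<bar> \<le> \<kappa> * (a - 1) * t powr (a - 2) * min 1 (t powr (a - 1))"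
    if "0 < t" "p \<in> Qd" for t p
  proof -
    let ?r = "upd j t p"
    have "?r \<in> Qd" using that by (auto simp: upd_def mem_Qd_iff)
    have "min 1 (min (F1' (fst ?r)) (min (F2' (snd ?r)) (sqrt (coord j ?r / coord j ?r)))) \<le> min 1 (t powr (a - 1))"
      using assms(2) F'_eq[OF that(1)] \<open>0 < t\<close> by (auto simp: upd_def coord_def)
    moreover have "0 \<le> \<kappa> * ((a - 1) * t powr (a - 2))"
      using \<open>0 < \<kappa>\<close> \<open>1 \<le> a\<close> by simp
    ultimately have "\<kappa> * ((a - 1) * t powr (a - 2)) *
        min 1 (min (F1' (fst ?r)) (min (F2' (snd ?r)) (sqrt (coord j ?r / coord j ?r))))
        \<le> \<kappa> * ((a - 1) * t powr (a - 2)) * min 1 (t powr (a - 1))"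
      by (rule mult_left_mono)
    then show ?thesis
      using \<kappa> \<open>?r \<in> Qd\<close> F''_eq[OF that(1)] by (auto simp: mult.assoc intro: order_trans)
  qed
  then show thesis using \<open>0 < \<kappa>\<close> that by blast
qed

lemma exponent_le_if_powr_quotient_bounded_at_0:
  fixes b e \<gamma> K :: real
  assumes "0 \<le> \<gamma>" and bound: "\<And>X. 0 < X \<Longrightarrow> X \<le> 1 \<Longrightarrow> X powr b / (2 + X) powr \<gamma> \<le> K * X powr e"
  shows "e \<le> b"
proof (rule exponent_le_if_powr_bounded_at_0[OF zero_less_one])
  fix X :: real assume "0 < X" "X \<le> 1"
  have "X powr b / 3 powr \<gamma> \<le> X powr b / (2 + X) powr \<gamma>"
    using \<open>0 < X\<close> \<open>X \<le> 1\<close> assms(1) by (intro divide_left_mono powr_mono2 mult_pos_pos) auto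
  also have "\<dots> \<le> K * X powr e"
    using bound \<open>0 < X\<close> \<open>X \<le> 1\<close> .
  finally show "X powr b \<le> 3 powr \<gamma> * K * X powr e"
    by (simp add: pos_divide_le_eq mult_ac)
qed

lemma exponent_le_if_powr_quotient_bounded_at_top:
  fixes b b' \<gamma> K a :: real
  assumes "0 \<le> \<gamma>" and bound: "\<And>s. 1 \<le> s \<Longrightarrow> s powr b * s powr b' / (1 + s + s) powr \<gamma> \<le> K * s powr a"
  shows "b + b' - \<gamma> \<le> a"
proof (rule exponent_le_if_powr_bounded_at_top)
  fix s :: real assume "1 \<le> s"
  have "s powr (b + b' - \<gamma>) / 3 powr \<gamma> = s powr b * s powr b' / (3 * s) powr \<gamma>"
    using \<open>1 \<le> s\<close> by (simp add: powr_mult powr_diff powr_add)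
  also have "\<dots> \<le> s powr b * s powr b' / (1 + s + s) powr \<gamma>"
    using \<open>1 \<le> s\<close> assms(1) by (intro divide_left_mono powr_mono2 mult_pos_pos) auto
  also have "\<dots> \<le> K * s powr a"
    using bound \<open>1 \<le> s\<close> .
  finally show "s powr (b + b' - \<gamma>) \<le> 3 powr \<gamma> * K * s powr a"
    by (simp add: pos_divide_le_eq mult_ac)
qed

lemma necessary_conditions_direction:
  fixes F1 F2 :: "real \<Rightarrow> real" and h :: "real \<times> real \<Rightarrow> real" and a b b' \<gamma> :: real
  assumes "all_conditions F1 F2 h" "j \<in> {1, 2}" "0 < a" "0 \<le> \<gamma>"
    and F: "(if j = 1 then F1 else F2) = (\<lambda>r. r powr a / a)"
    and h: "\<And>t c. 0 \<le> t \<Longrightarrow> 0 \<le> c \<Longrightarrow> h (upd j t (c, c)) = t powr b * c powr b' / (1 + t + c) powr \<gamma>"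
  shows "2 \<le> a \<and> 2 * a - 1 \<le> b \<and> b + b' \<le> \<gamma> + a"
proof -
  obtain F1' F1'' F2' F2'' Dh D2h r0 where
    "cond_F F1 F1' F1''" "cond_F F2 F2' F2''" "0 < r0" "near0_F F1'' r0" "near0_F F2'' r0"
    and "cond_h h Dh D2h" and "cond_theta F1' F1'' F2' F2'' Dh D2h"
    using assms(1) unfolding all_conditions_def by blast
  define F' F'' where "F' = (if j = 1 then F1' else F2')" and "F'' = (if j = 1 then F1'' else F2'')"
  have cF: "cond_F (\<lambda>r. r powr a / a) F' F''" and "near0_F F'' r0"
    using F \<open>cond_F F1 F1' F1''\<close> \<open>cond_F F2 F2' F2''\<close> \<open>near0_F F1'' r0\<close> \<open>near0_F F2'' r0\<close>
    by (simp_all add: F'_def F''_def split: if_splits)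
  note F'_eq = cond_F_powr_derivative1[OF \<open>0 < a\<close> cF]
  note F''_eq = cond_F_powr_derivative2[OF \<open>0 < a\<close> cF]
  have "2 \<le> a"
    using ge_2_if_near0_F[OF \<open>near0_F F'' r0\<close> \<open>0 < r0\<close> F''_eq] cF by (simp add: cond_F_def)
  obtain \<kappa> where "0 < \<kappa>" and E: "\<And>t p. 0 < t \<Longrightarrow> p \<in> Qd \<Longrightarrow>
      \<bar>D2h j j (upd j t p)\<bar> \<le> \<kappa> * (a - 1) * t powr (a - 2) * min 1 (t powr (a - 1))"
    using diagonal_second_partial_le[OF \<open>cond_theta F1' F1'' F2' F2'' Dh D2h\<close> assms(2), of a]
      \<open>2 \<le> a\<close> F'_eq F''_eq unfolding F'_def F''_def by auto
  have "2 * a - 1 \<le> b"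
  proof (rule exponent_le_if_powr_quotient_bounded_at_0[OF assms(4)])
    fix X :: real assume "0 < X" "X \<le> 1"
    have "\<bar>h (upd j X (1, 1))\<bar> \<le> \<kappa> * (a - 1) / ((2 * a - 1) * (2 * a - 1 - 1)) * X powr (2 * a - 1)"
    proof (rule abs_le_powr_on_line[OF \<open>cond_h h Dh D2h\<close> assms(2) _ \<open>0 < X\<close>])
      fix t :: real assume "0 < t"
      have "\<bar>D2h j j (upd j t (1, 1))\<bar> \<le> \<kappa> * (a - 1) * t powr (a - 2) * min 1 (t powr (a - 1))"
        using E[OF \<open>0 < t\<close>] by (simp add: mem_Qd_iff)
      also have "\<dots> \<le> \<kappa> * (a - 1) * t powr (a - 2) * t powr (a - 1)"
        using \<open>0 < \<kappa>\<close> \<open>2 \<le> a\<close> by (intro mult_left_mono) auto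
      also have "\<dots> = \<kappa> * (a - 1) * t powr (2 * a - 1 - 2)"
        by (simp add: mult.assoc powr_add[symmetric] algebra_simps)
      finally show "\<bar>D2h j j (upd j t (1, 1))\<bar> \<le> \<kappa> * (a - 1) * t powr (2 * a - 1 - 2)" .
    qed (use \<open>2 \<le> a\<close> in \<open>auto simp: mem_Qd_iff\<close>)
    then show "X powr b / (2 + X) powr \<gamma> \<le> \<kappa> * (a - 1) / ((2 * a - 1) * (2 * a - 1 - 1)) * X powr (2 * a - 1)"
      using h[of X 1] \<open>0 < X\<close> by (simp add: add_ac)
  qed
  moreover have "b + b' - \<gamma> \<le> a"
  proof (rule exponent_le_if_powr_quotient_bounded_at_top[OF assms(4)])
    fix s :: real assume "1 \<le> s"
    have "\<bar>h (upd j s (s, s))\<bar> \<le> \<kappa> * (a - 1) / (a * (a - 1)) * s powr a"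
    proof (rule abs_le_powr_on_line[OF \<open>cond_h h Dh D2h\<close> assms(2)])
      fix t :: real assume "0 < t"
      have "\<bar>D2h j j (upd j t (s, s))\<bar> \<le> \<kappa> * (a - 1) * t powr (a - 2) * min 1 (t powr (a - 1))"
        using E[OF \<open>0 < t\<close>] \<open>1 \<le> s\<close> by (simp add: mem_Qd_iff)
      also have "\<dots> \<le> \<kappa> * (a - 1) * t powr (a - 2) * 1"
        using \<open>0 < \<kappa>\<close> \<open>2 \<le> a\<close> by (intro mult_left_mono) auto
      finally show "\<bar>D2h j j (upd j t (s, s))\<bar> \<le> \<kappa> * (a - 1) * t powr (a - 2)"
        by simp
    qed (use \<open>1 \<le> s\<close> \<open>2 \<le> a\<close> in \<open>auto simp: mem_Qd_iff\<close>)
    then show "s powr b * s powr b' / (1 + s + s) powr \<gamma> \<le> \<kappa> / a * s powr a"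
      using h[of s s] \<open>1 \<le> s\<close> \<open>2 \<le> a\<close> by simp
  qed
  ultimately show ?thesis using \<open>2 \<le> a\<close> by simp
qed

theorem propositionA1:
  fixes a1 a2 b1 b2 \<gamma> :: real
  assumes "a1 > 0" "a2 > 0" "b1 > 0" "b2 > 0" "\<gamma> > 0"
  shows "all_conditions (\<lambda>r. r powr a1 / a1) (\<lambda>r. r powr a2 / a2)
            (\<lambda>(r1, r2). r1 powr b1 * r2 powr b2 / (1 + r1 + r2) powr \<gamma>)
         \<longleftrightarrow> (a1 \<ge> 2 \<and> a2 \<ge> 2 \<and> b1 \<ge> 2 * a1 - 1 \<and> b2 \<ge> 2 * a2 - 1 \<and>
              b1 + b2 \<le> \<gamma> + min a1 a2)"
    (is "all_conditions ?F1 ?F2 ?h \<longleftrightarrow> _")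
proof
  assume conds: "all_conditions ?F1 ?F2 ?h"
  have "2 \<le> a1 \<and> 2 * a1 - 1 \<le> b1 \<and> b1 + b2 \<le> \<gamma> + a1"
    using assms by (intro necessary_conditions_direction[OF conds, of 1]) (auto simp: upd_def)
  moreover have "2 \<le> a2 \<and> 2 * a2 - 1 \<le> b2 \<and> b2 + b1 \<le> \<gamma> + a2"
    using assms by (intro necessary_conditions_direction[OF conds, of 2]) (auto simp: upd_def add_ac mult_ac)
  ultimately show "a1 \<ge> 2 \<and> a2 \<ge> 2 \<and> b1 \<ge> 2 * a1 - 1 \<and> b2 \<ge> 2 * a2 - 1 \<and> b1 + b2 \<le> \<gamma> + min a1 a2"
    by auto
next
  assume "a1 \<ge> 2 \<and> a2 \<ge> 2 \<and> b1 \<ge> 2 * a1 - 1 \<and> b2 \<ge> 2 * a2 - 1 \<and> b1 + b2 \<le> \<gamma> + min a1 a2"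
  then have "all_conditions ?F1 ?F2 (qpoly [(1, b1, b2, \<gamma>)])"
    using assms(5) by (intro all_conditions_qpoly[of a1 a2 "b1 + b2 - \<gamma>" b1 b2]) auto
  moreover have "?h = qpoly [(1, b1, b2, \<gamma>)]"
    by (auto simp: fun_eq_iff qmonom_def powr_minus divide_inverse)
  ultimately show "all_conditions ?F1 ?F2 ?h"
    by simp
qed

end
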